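(* Let $X$ and $Y$ be Hausdorff spaces such that $X\times Y$ is normal. Then $(C(X,Y),\tau_\Gamma)$ is a regular space.
   Context: For topological spaces $X,Y$, $C(X,Y)$ denotes the set of continuous maps $X\to Y$; each $f\in C(X,Y)$ is identified with its graph $\{(x,f(x)):x\in X\}\subset X\times Y$. For $G$ open in $X\times Y$ let $F_G=\{f\in C(X,Y): f\subset G\}$. The graph topology $\tau_\Gamma$ on $C(X,Y)$ is the topology having the sets $F_G$ ($G$ open in $X\times Y$) as a base. *)

theory Defs
  imports "HOL-Analysis.Analysis"
begin

definition graph_on :: "'a topology \<Rightarrow> ('a \<Rightarrow> 'b) \<Rightarrow> ('a \<times> 'b) set" where
  "graph_on X f = {(x, f x) | x. x \<in> topspace X}"

text \<open>C(X,Y): continuous maps X to Y, each identified with its graph.\<close>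
definition cmaps :: "'a topology \<Rightarrow> 'b topology \<Rightarrow> ('a \<times> 'b) set set" where
  "cmaps X Y = {graph_on X f | f. continuous_map X Y f}"

definition graph_basic :: "'a topology \<Rightarrow> 'b topology \<Rightarrow> ('a \<times> 'b) set \<Rightarrow> ('a \<times> 'b) set set" where
  "graph_basic X Y G = {g \<in> cmaps X Y. g \<subseteq> G}"

definition graph_topology :: "'a topology \<Rightarrow> 'b topology \<Rightarrow> ('a \<times> 'b) set topology" where
  "graph_topology X Y =
     topology_generated_by {graph_basic X Y G | G. openin (prod_topology X Y) G}"

end

theory Submission
  imports Defs
begin

text \<open>A continuous map into a Hausdorff space has a closed graph, so normality of \<open>X \<times> Y\<close>
  puts an open \<open>H\<close> with \<open>f \<subseteq> H\<close> and closure inside any given basic neighbourhood \<open>G\<close> of \<open>f\<close>.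
  Then the closure of \<open>F\<^sub>H\<close> in the graph topology lies in \<open>F\<^bsub>cl H\<^esub> \<subseteq> F\<^sub>G\<close>: if some point
  \<open>(x, g x)\<close> of \<open>g\<close> lies outside \<open>cl H\<close>, then removing the closed set \<open>cl H \<inter> ({x} \<times> Y)\<close> from
  \<open>X \<times> Y\<close> leaves an open set whose basic neighbourhood contains \<open>g\<close> and misses \<open>F\<^sub>H\<close>,
  since every graph meets the fibre over \<open>x\<close>. The T1 property follows by removing a
  single closed point \<open>(x, g x)\<close> from \<open>X \<times> Y\<close>.\<close>

lemma regular_space_closure_of_subsetI:
  assumes "\<And>W x. openin T W \<Longrightarrow> x \<in> W \<Longrightarrow> \<exists>U. openin T U \<and> x \<in> U \<and> T closure_of U \<subseteq> W"
  shows "regular_space T"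
  unfolding neighbourhood_base_of_closedin[symmetric] neighbourhood_base_of
proof (intro allI impI, elim conjE)
  fix W x
  assume "openin T W" "x \<in> W"
  then obtain U where "openin T U" "x \<in> U" "T closure_of U \<subseteq> W"
    using assms by blast
  then show "\<exists>U V. openin T U \<and> closedin T V \<and> x \<in> U \<and> U \<subseteq> V \<and> V \<subseteq> W"
    by (meson closedin_closure_of closure_of_subset openin_subset)
qed

lemma mem_graph_on [simp]: "(x, y) \<in> graph_on X f \<longleftrightarrow> x \<in> topspace X \<and> y = f x"
  by (auto simp: graph_on_def)

lemma graph_on_eq_iff: "graph_on X f = graph_on X g \<longleftrightarrow> (\<forall>x \<in> topspace X. f x = g x)"
  by (auto simp: graph_on_def)

lemma graph_on_subset_topspace:
  "continuous_map X Y f \<Longrightarrow> graph_on X f \<subseteq> topspace (prod_topology X Y)"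
  by (auto simp: graph_on_def continuous_map_def)

lemma closedin_graph_on:
  assumes "Hausdorff_space Y" "continuous_map X Y f"
  shows "closedin (prod_topology X Y) (graph_on X f)"
proof -
  have "closedin (prod_topology X Y) {p \<in> topspace (prod_topology X Y). (f \<circ> fst) p = snd p}"
    by (rule closedin_continuous_maps_eq[OF assms(1)
          continuous_map_compose[OF continuous_map_fst assms(2)] continuous_map_snd])
  moreover have "{p \<in> topspace (prod_topology X Y). (f \<circ> fst) p = snd p} = graph_on X f"
    using assms(2) by (auto simp: graph_on_def continuous_map_def)
  ultimately show ?thesis by simp
qed

lemma mem_cmaps_iff: "g \<in> cmaps X Y \<longleftrightarrow> (\<exists>f. g = graph_on X f \<and> continuous_map X Y f)"
  by (auto simp: cmaps_def)

lemma graph_basic_mono: "G \<subseteq> G' \<Longrightarrow> graph_basic X Y G \<subseteq> graph_basic X Y G'"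
  by (auto simp: graph_basic_def)

lemma graph_basic_Int: "graph_basic X Y (G \<inter> G') = graph_basic X Y G \<inter> graph_basic X Y G'"
  by (auto simp: graph_basic_def)

lemma graph_basic_topspace: "graph_basic X Y (topspace (prod_topology X Y)) = cmaps X Y"
  using graph_on_subset_topspace by (fastforce simp: graph_basic_def cmaps_def)

lemma topspace_graph_topology: "topspace (graph_topology X Y) = cmaps X Y"
proof -
  have "\<Union>{graph_basic X Y G | G. openin (prod_topology X Y) G} = cmaps X Y"
    using graph_basic_topspace[of X Y] openin_topspace[of "prod_topology X Y"]
    by (auto simp: graph_basic_def)
  then show ?thesis
    by (simp add: graph_topology_def topology_generated_by_topspace)
qed

lemma openin_graph_basic:
  "openin (prod_topology X Y) G \<Longrightarrow> openin (graph_topology X Y) (graph_basic X Y G)"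
  unfolding graph_topology_def by (auto intro: topology_generated_by_Basis)

lemma openin_graph_topology_imp_basic:
  assumes "openin (graph_topology X Y) W" "f \<in> W"
  shows "\<exists>G. openin (prod_topology X Y) G \<and> f \<in> graph_basic X Y G \<and> graph_basic X Y G \<subseteq> W"
proof -
  have "generate_topology_on {graph_basic X Y G | G. openin (prod_topology X Y) G} W"
    using assms(1) by (simp add: graph_topology_def openin_topology_generated_by)
  then show ?thesis
    using assms(2)
  proof (induction arbitrary: f rule: generate_topology_on.induct)
    case Empty
    then show ?case by simp
  next
    case (Int a b)
    then obtain G1 G2 where "openin (prod_topology X Y) G1" "f \<in> graph_basic X Y G1"
      "graph_basic X Y G1 \<subseteq> a" "openin (prod_topology X Y) G2" "f \<in> graph_basic X Y G2"
      "graph_basic X Y G2 \<subseteq> b"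
      by (meson IntE)
    then have "openin (prod_topology X Y) (G1 \<inter> G2) \<and> f \<in> graph_basic X Y (G1 \<inter> G2)
        \<and> graph_basic X Y (G1 \<inter> G2) \<subseteq> a \<inter> b"
      by (auto simp: graph_basic_Int)
    then show ?case
      by blast
  next
    case (UN K)
    then show ?case
      by (meson UnionE Union_upper order_trans)
  next
    case (Basis s)
    then show ?case by auto
  qed
qed

lemma graph_topology_closure_of_graph_basic:
  assumes "t1_space X"
  shows "graph_topology X Y closure_of graph_basic X Y H
           \<subseteq> graph_basic X Y (prod_topology X Y closure_of H)"
proof
  let ?P = "prod_topology X Y"
  fix g
  assume g_cl: "g \<in> graph_topology X Y closure_of graph_basic X Y H"
  then have "g \<in> cmaps X Y"
    by (simp add: in_closure_of topspace_graph_topology)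
  then obtain g0 where g0: "g = graph_on X g0" "continuous_map X Y g0"
    by (auto simp: mem_cmaps_iff)
  show "g \<in> graph_basic X Y (?P closure_of H)"
  proof (rule ccontr)
    assume "g \<notin> graph_basic X Y (?P closure_of H)"
    then have "\<not> g \<subseteq> ?P closure_of H"
      using \<open>g \<in> cmaps X Y\<close> by (simp add: graph_basic_def)
    then obtain x where x: "x \<in> topspace X" "(x, g0 x) \<notin> ?P closure_of H"
      using g0(1) by (auto simp: graph_on_def)
    define U where "U = topspace ?P - (?P closure_of H \<inter> {x} \<times> topspace Y)"
    have "closedin ?P ({x} \<times> topspace Y)"
      using closedin_t1_singleton[OF assms x(1)] by (simp add: closedin_prod_Times_iff)
    then have "closedin ?P (?P closure_of H \<inter> {x} \<times> topspace Y)"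
      by (simp add: closedin_Int)
    then have "openin ?P U"
      unfolding U_def by (rule openin_diff[OF openin_topspace])
    moreover have "g \<in> graph_basic X Y U"
    proof -
      have "g \<subseteq> topspace ?P"
        using g0 graph_on_subset_topspace by blast
      moreover have "p \<notin> ?P closure_of H \<inter> {x} \<times> topspace Y" if "p \<in> g" for p
        using that g0(1) x(2) by auto
      ultimately show ?thesis
        using \<open>g \<in> cmaps X Y\<close> by (auto simp: graph_basic_def U_def)
    qed
    moreover have "h \<notin> graph_basic X Y U" if h: "h \<in> graph_basic X Y H" for h
    proof -
      obtain h0 where h0: "h = graph_on X h0" "continuous_map X Y h0" "h \<subseteq> H"
        using h unfolding graph_basic_def cmaps_def by blast
      have xh: "(x, h0 x) \<in> h"
        using h0(1) x(1) by simp
      then have "(x, h0 x) \<in> topspace ?P"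
        using h0(1,2) graph_on_subset_topspace by blast
      then have "(x, h0 x) \<in> ?P closure_of H \<inter> {x} \<times> topspace Y"
        using xh h0(3) closure_of_subset_Int[of ?P H] by auto
      then show ?thesis
        using xh unfolding graph_basic_def U_def by blast
    qed
    ultimately show False
      using g_cl openin_graph_basic unfolding in_closure_of by blast
  qed
qed

lemma regular_space_graph_topology:
  assumes "t1_space X" "Hausdorff_space Y" "normal_space (prod_topology X Y)"
  shows "regular_space (graph_topology X Y)"
proof (rule regular_space_closure_of_subsetI)
  let ?P = "prod_topology X Y"
  fix W f
  assume "openin (graph_topology X Y) W" "f \<in> W"
  then obtain G where G: "openin ?P G" "f \<in> graph_basic X Y G" "graph_basic X Y G \<subseteq> W"
    by (meson openin_graph_topology_imp_basic)
  then obtain f0 where "f = graph_on X f0" "continuous_map X Y f0"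
    unfolding graph_basic_def cmaps_def by blast
  then have "closedin ?P f"
    using closedin_graph_on[OF assms(2)] by simp
  moreover have "f \<subseteq> G"
    using G(2) by (simp add: graph_basic_def)
  ultimately obtain H where H: "openin ?P H" "f \<subseteq> H" "?P closure_of H \<subseteq> G"
    using assms(3) G(1) unfolding normal_space_alt by meson
  have "graph_topology X Y closure_of graph_basic X Y H \<subseteq> W"
    using graph_topology_closure_of_graph_basic[OF assms(1)] graph_basic_mono[OF H(3)] G(3)
    by (meson order_trans)
  moreover have "f \<in> graph_basic X Y H"
    using G(2) H(2) by (simp add: graph_basic_def)
  ultimately show "\<exists>U. openin (graph_topology X Y) U \<and> f \<in> U \<and> graph_topology X Y closure_of U \<subseteq> W"
    using openin_graph_basic[OF H(1)] by blast
qed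

lemma t1_space_graph_topology:
  assumes "t1_space X" "t1_space Y"
  shows "t1_space (graph_topology X Y)"
  unfolding t1_space_def topspace_graph_topology
proof (intro ballI impI)
  let ?P = "prod_topology X Y"
  fix f g
  assume "f \<in> cmaps X Y" "g \<in> cmaps X Y" "f \<noteq> g"
  then obtain f0 g0 where f0: "f = graph_on X f0" "continuous_map X Y f0"
    and g0: "g = graph_on X g0" "continuous_map X Y g0"
    unfolding cmaps_def by blast
  then obtain x where x: "x \<in> topspace X" "f0 x \<noteq> g0 x"
    using \<open>f \<noteq> g\<close> graph_on_eq_iff by metis
  have "g0 x \<in> topspace Y"
    using continuous_map_image_subset_topspace[OF g0(2)] x(1) by (simp add: image_subset_iff)
  then have "closedin ?P ({x} \<times> {g0 x})"
    using closedin_t1_singleton assms x(1) closedin_prod_Times_iff by metis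
  then have "openin ?P (topspace ?P - {x} \<times> {g0 x})"
    by (rule openin_diff[OF openin_topspace])
  then have "openin (graph_topology X Y) (graph_basic X Y (topspace ?P - {x} \<times> {g0 x}))"
    by (rule openin_graph_basic)
  moreover have "f \<in> graph_basic X Y (topspace ?P - {x} \<times> {g0 x})"
    using \<open>f \<in> cmaps X Y\<close> f0 x(2) graph_on_subset_topspace[OF f0(2)]
    by (auto simp: graph_basic_def)
  moreover have "g \<notin> graph_basic X Y (topspace ?P - {x} \<times> {g0 x})"
  proof -
    have "(x, g0 x) \<in> g"
      using g0(1) x(1) by simp
    then show ?thesis
      unfolding graph_basic_def by blast
  qed
  ultimately show "\<exists>U. openin (graph_topology X Y) U \<and> f \<in> U \<and> g \<notin> U"
    by blast
qed

theorem mainTheorem1: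
  fixes X :: "'a topology" and Y :: "'b topology"
  assumes "Hausdorff_space X" and "Hausdorff_space Y"
    and "normal_space (prod_topology X Y)"
  shows "regular_space (graph_topology X Y) \<and> t1_space (graph_topology X Y)"
  using assms Hausdorff_imp_t1_space[OF assms(1)] Hausdorff_imp_t1_space[OF assms(2)]
  by (simp add: regular_space_graph_topology t1_space_graph_topology)

end
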